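(* Let $(x^*,u^* )$ be a local solution of problem (P) with radius $\delta>0$, for $k=1,2,\dots$ let $(x_k,u_k)$ be a global solution of $(P_k)$, let $\mu_k(t,s):=\frac{\chi_{(t-\tau,t)}(s)\exp(k\,x_k(s))}{\int_{t-\tau}^t\exp(k\,x_k(\hat s))\,\mathrm{d}\hat s}$ (componentwise), and let $\mu\in L^\infty_w(I;\mathcal{M}(I_\tau))^n$ be a weak-$\star$ limit in $(L^1(I;C(I_\tau))^n)^*$ of a subsequence of $(\mu_k)$ satisfying $\mu(t)\in\partial\max x^*_t$ for a.a. $t\in I$. Then $\mu\ge0$ and, for almost all $t\in I$ and all $i=1,\dots,n$, $\|\mu_i(t)\|_{\mathcal{M}(I_\tau)}=1$ and $\operatorname{supp}(\mu_i(t))\subset\operatorname{argmax}_{s\in[t-\tau,t]}x^*_i(s)$.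
   Context: Let $n,m\ge1$, $T>0$, $\tau>0$, $I=[0,T]$, $I_\tau=[-\tau,T]$. For $x\in C(I_\tau;\mathbb{R}^n)$, $t\in I$: $\max x_t:=\max_{s\in[t-\tau,t]}x(s)$ and $\mathrm{LIE}_k(x_t):=\frac1k\log\big(\int_{t-\tau}^t\exp(kx(s))\,\mathrm{d}s\big)$, componentwise. Standing assumptions: $F(x,v,u)=F_0(x,v)+F_1(x,v)u$ with $F_0:\mathbb{R}^n\times\mathbb{R}^n\to\mathbb{R}^n$, $F_1:\mathbb{R}^n\times\mathbb{R}^n\to\mathbb{R}^{n\times m}$ globally Lipschitz and $C^1$; $\phi\in C([-\tau,0];\mathbb{R}^n)$; $U\subset\mathbb{R}^m$ nonempty convex compact; $j:I\times\mathbb{R}^n\times\mathbb{R}^m\to\mathbb{R}$ a nonnegative normal integrand, convex in its third argument, differentiable in its second argument with $j_x$ continuous in the second and third arguments. Feasible controls: $u\in L^\infty(I;\mathbb{R}^m)$, $u(t)\in U$ a.e. Problem (P): minimize $J(x,u)=\int_0^Tj(t,x(t),u(t))\,\mathrm{d}t$ over feasible $u$, $x\in C(I_\tau;\mathbb{R}^n)\cap W^{1,\infty}(I;\mathbb{R}^n)$ solving $x'(t)=F(x(t),\max x_t,u(t))$ a.e. on $(0,T)$, $x=\phi$ on $[-\tau,0]$. Local solution with radius $\delta$: feasible $u^*$ with state $x^*$ and $J(x^*,u^* )\le J(x,u)$ for all feasible $u$ with $\|u-u^*\|_{L^2}\le\delta$. Problem $(P_k)$: minimize $\int_0^Tj(t,x(t),u(t))+\frac12|u(t)-u^*(t)|^2\,\mathrm{d}t$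 over feasible $u$ with $\|u-u^*\|_{L^2}\le\delta$, $x$ solving $x'(t)=F(x(t),\mathrm{LIE}_k(x_t),u(t))$ a.e. on $I$, $x=\phi$ on $[-\tau,0]$. $\mathcal{M}(I_\tau)$: regular signed Borel measures on $I_\tau$ with total variation norm. $L^\infty_w(I;\mathcal{M}(I_\tau))$: equivalence classes of weak-$\star$ measurable $\nu:I\to\mathcal{M}(I_\tau)$ with $|\langle\nu(t),z\rangle|\le c\|z\|_{C(I_\tau)}$ for a.a. $t$, all $z$, some $c\ge0$, identified with the dual of $L^1(I;C(I_\tau))$ via $\langle\nu,z\rangle=\int_0^T\langle\nu(t),z(t)\rangle\,\mathrm{d}t$; $\mu_k$ is identified with $t\mapsto\mu_k(t,s)\,\mathrm{d}s$. $\mu(t)\in\partial\max x^*_t$ means that for each $i$, $\mu_i(t)$ lies in the convex subdifferential of $C(I_\tau)\ni w\mapsto\max_{s\in[t-\tau,t]}w(s)$ at $x^*_i$. $\operatorname{supp}$ is the support of a measure. *)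

theory Defs
  imports "HOL-Analysis.Analysis"
begin

definition bsets :: "real set \<Rightarrow> real set set" where
  "bsets K = sets (restrict_space borel K)"

definition tv :: "real set \<Rightarrow> (real set \<Rightarrow> real) \<Rightarrow> real set \<Rightarrow> real" where
  "tv K \<nu> A = (SUP P \<in> {P. finite P \<and> P \<subseteq> bsets K \<and> disjoint P \<and> \<Union>P = A}. \<Sum>B\<in>P. \<bar>\<nu> B\<bar>)"

definition regular_sm :: "real set \<Rightarrow> (real set \<Rightarrow> real) \<Rightarrow> bool" where
  "regular_sm K \<nu> \<longleftrightarrow> (\<forall>A\<in>bsets K.
      tv K \<nu> A = (SUP C \<in> {C. compact C \<and> C \<subseteq> A}. tv K \<nu> C) \<and>
      tv K \<nu> A = (INF V \<in> {V. openin (top_of_set K) V \<and> A \<subseteq> V}. tv K \<nu> V))"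

definition signed_measure_on :: "real set \<Rightarrow> (real set \<Rightarrow> real) \<Rightarrow> bool" where
  "signed_measure_on K \<nu> \<longleftrightarrow> \<nu> {} = 0 \<and>
     (\<forall>A :: nat \<Rightarrow> real set. range A \<subseteq> bsets K \<longrightarrow> disjoint_family A \<longrightarrow>
        (\<lambda>n. \<nu> (A n)) sums \<nu> (\<Union>(range A))) \<and> regular_sm K \<nu>"

definition tvnorm :: "real set \<Rightarrow> (real set \<Rightarrow> real) \<Rightarrow> real" where
  "tvnorm K \<nu> = tv K \<nu> K"

definition sm_pos :: "real set \<Rightarrow> (real set \<Rightarrow> real) \<Rightarrow> real measure" where
  "sm_pos K \<nu> = measure_of K (bsets K) (\<lambda>A. ennreal ((tv K \<nu> A + \<nu> A) / 2))"

definition sm_neg :: "real set \<Rightarrow> (real set \<Rightarrow> real) \<Rightarrow> real measure" where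
  "sm_neg K \<nu> = measure_of K (bsets K) (\<lambda>A. ennreal ((tv K \<nu> A - \<nu> A) / 2))"

definition spair :: "real set \<Rightarrow> (real set \<Rightarrow> real) \<Rightarrow> (real \<Rightarrow> real) \<Rightarrow> real" where
  "spair K \<nu> z = (\<integral>s. z s \<partial>sm_pos K \<nu>) - (\<integral>s. z s \<partial>sm_neg K \<nu>)"

definition sm_nonneg :: "real set \<Rightarrow> (real set \<Rightarrow> real) \<Rightarrow> bool" where
  "sm_nonneg K \<nu> \<longleftrightarrow> (\<forall>A\<in>bsets K. 0 \<le> \<nu> A)"

definition supp_sm :: "real set \<Rightarrow> (real set \<Rightarrow> real) \<Rightarrow> real set" where
  "supp_sm K \<nu> = K - \<Union>{V. openin (top_of_set K) V \<and> tv K \<nu> V = 0}"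

definition supnorm :: "real set \<Rightarrow> (real \<Rightarrow> real) \<Rightarrow> real" where
  "supnorm K z = Sup ((\<lambda>s. \<bar>z s\<bar>) ` K)"

text \<open>z in L^1(I; C(I_tau)) (Bochner): values continuous on K, strongly measurable
  (a.e. sup-norm limit of simple measurable C(K)-valued functions), integrable norm.\<close>
definition L1C :: "real \<Rightarrow> real \<Rightarrow> (real \<Rightarrow> real \<Rightarrow> real) \<Rightarrow> bool" where
  "L1C \<tau> T z \<longleftrightarrow>
     (\<forall>t\<in>{0..T}. continuous_on {-\<tau>..T} (z t)) \<and>
     (\<exists>f :: nat \<Rightarrow> real \<Rightarrow> real \<Rightarrow> real.
        (\<forall>n. (\<forall>t\<in>{0..T}. continuous_on {-\<tau>..T} (f n t)) \<and>
             finite ((\<lambda>t. restrict (f n t) {-\<tau>..T}) ` {0..T}) \<and>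
             (\<forall>g. {t\<in>{0..T}. restrict (f n t) {-\<tau>..T} = g} \<in> sets (lebesgue_on {0..T}))) \<and>
        (AE t in lebesgue_on {0..T}. (\<lambda>n. supnorm {-\<tau>..T} (\<lambda>s. f n t s - z t s)) \<longlonglongrightarrow> 0)) \<and>
     (\<integral>\<^sup>+ t. ennreal (supnorm {-\<tau>..T} (z t)) \<partial>lebesgue_on {0..T}) < \<infinity>"

text \<open>nu in L^infty_w(I; M(I_tau))^n (representative).\<close>
definition Linf_w :: "real \<Rightarrow> real \<Rightarrow> (real \<Rightarrow> 'n \<Rightarrow> real set \<Rightarrow> real) \<Rightarrow> bool" where
  "Linf_w \<tau> T \<nu> \<longleftrightarrow>
     (\<forall>t\<in>{0..T}. \<forall>i. signed_measure_on {-\<tau>..T} (\<nu> t i)) \<and>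
     (\<forall>i z. continuous_on {-\<tau>..T} z \<longrightarrow>
        (\<lambda>t. spair {-\<tau>..T} (\<nu> t i) z) \<in> borel_measurable (lebesgue_on {0..T})) \<and>
     (\<exists>c\<ge>0. \<forall>i. AE t in lebesgue_on {0..T}. \<forall>z. continuous_on {-\<tau>..T} z \<longrightarrow>
        \<bar>spair {-\<tau>..T} (\<nu> t i) z\<bar> \<le> c * supnorm {-\<tau>..T} z)"

definition maxwin :: "real \<Rightarrow> (real \<Rightarrow> real^'n) \<Rightarrow> real \<Rightarrow> real^'n" where
  "maxwin \<tau> x t = (\<chi> i. Sup ((\<lambda>s. x s $ i) ` {t-\<tau>..t}))"

definition LIE :: "nat \<Rightarrow> real \<Rightarrow> (real \<Rightarrow> real^'n) \<Rightarrow> real \<Rightarrow> real^'n" where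
  "LIE k \<tau> x t = (\<chi> i. (1 / real k) * ln (integral {t-\<tau>..t} (\<lambda>s. exp (real k * x s $ i))))"

definition C1_map :: "('a::real_normed_vector \<Rightarrow> 'b::real_normed_vector) \<Rightarrow> bool" where
  "C1_map f \<longleftrightarrow> (\<exists>Df. (\<forall>p. (f has_derivative blinfun_apply (Df p)) (at p)) \<and> continuous_on UNIV Df)"

definition normal_integrand :: "real \<Rightarrow> (real \<Rightarrow> real^'n \<Rightarrow> real^'m \<Rightarrow> real) \<Rightarrow> bool" where
  "normal_integrand T j \<longleftrightarrow>
     (\<lambda>(t, x, u). j t x u) \<in> borel_measurable (lebesgue_on {0..T} \<Otimes>\<^sub>M borel) \<and>
     (\<forall>t\<in>{0..T}. \<forall>c. closed {p. j t (fst p) (snd p) \<le> c})"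

definition standing_assms ::
  "real \<Rightarrow> real \<Rightarrow> (real^'n \<Rightarrow> real^'n \<Rightarrow> real^'n) \<Rightarrow> (real^'n \<Rightarrow> real^'n \<Rightarrow> real^'m^'n)
   \<Rightarrow> (real \<Rightarrow> real^'n) \<Rightarrow> (real^'m) set \<Rightarrow> (real \<Rightarrow> real^'n \<Rightarrow> real^'m \<Rightarrow> real) \<Rightarrow> bool" where
  "standing_assms \<tau> T F0 F1 \<phi> U j \<longleftrightarrow>
     0 < T \<and> 0 < \<tau> \<and>
     (\<exists>L. L-lipschitz_on UNIV (\<lambda>(x, v). F0 x v)) \<and> C1_map (\<lambda>(x, v). F0 x v) \<and>
     (\<exists>L. L-lipschitz_on UNIV (\<lambda>(x, v). F1 x v)) \<and> C1_map (\<lambda>(x, v). F1 x v) \<and>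
     continuous_on {-\<tau>..0} \<phi> \<and>
     U \<noteq> {} \<and> convex U \<and> compact U \<and>
     (\<forall>t\<in>{0..T}. \<forall>x u. 0 \<le> j t x u) \<and> normal_integrand T j \<and>
     (\<forall>t\<in>{0..T}. \<forall>x. convex_on UNIV (j t x)) \<and>
     (\<exists>jx :: real \<Rightarrow> real^'n \<Rightarrow> real^'m \<Rightarrow> ((real^'n) \<Rightarrow>\<^sub>L real).
        (\<forall>t\<in>{0..T}. \<forall>x u. ((\<lambda>y. j t y u) has_derivative blinfun_apply (jx t x u)) (at x)) \<and>
        (\<forall>t\<in>{0..T}. continuous_on UNIV (\<lambda>(x, u). jx t x u)))"

definition feasible :: "real \<Rightarrow> (real^'m) set \<Rightarrow> (real \<Rightarrow> real^'m) \<Rightarrow> bool" where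
  "feasible T U u \<longleftrightarrow> u \<in> borel_measurable (lebesgue_on {0..T}) \<and>
     (\<exists>c. AE t in lebesgue_on {0..T}. norm (u t) \<le> c) \<and>
     (AE t in lebesgue_on {0..T}. u t \<in> U)"

text \<open>x in C(I_tau) \<inter> W^{1,\<infinity>}(I) solving x' = F(x, D x, u) a.e. on I, x = phi on [-tau,0].\<close>
definition is_state ::
  "real \<Rightarrow> real \<Rightarrow> (real^'n \<Rightarrow> real^'n \<Rightarrow> real^'n) \<Rightarrow> (real^'n \<Rightarrow> real^'n \<Rightarrow> real^'m^'n)
   \<Rightarrow> ((real \<Rightarrow> real^'n) \<Rightarrow> real \<Rightarrow> real^'n) \<Rightarrow> (real \<Rightarrow> real^'n)
   \<Rightarrow> (real \<Rightarrow> real^'m) \<Rightarrow> (real \<Rightarrow> real^'n) \<Rightarrow> bool" where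
  "is_state \<tau> T F0 F1 D \<phi> u x \<longleftrightarrow>
     continuous_on {-\<tau>..T} x \<and> (\<exists>L. L-lipschitz_on {0..T} x) \<and>
     (\<forall>s\<in>{-\<tau>..0}. x s = \<phi> s) \<and>
     (AE t in lebesgue_on {0..T}.
        (x has_vector_derivative (F0 (x t) (D x t) + F1 (x t) (D x t) *v u t)) (at t))"

definition Jcost :: "real \<Rightarrow> (real \<Rightarrow> real^'n \<Rightarrow> real^'m \<Rightarrow> real) \<Rightarrow> (real \<Rightarrow> real^'n) \<Rightarrow> (real \<Rightarrow> real^'m) \<Rightarrow> ennreal" where
  "Jcost T j x u = (\<integral>\<^sup>+ t. ennreal (j t (x t) (u t)) \<partial>lebesgue_on {0..T})"

definition L2sq :: "real \<Rightarrow> (real \<Rightarrow> real^'m) \<Rightarrow> (real \<Rightarrow> real^'m) \<Rightarrow> ennreal" where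
  "L2sq T u v = (\<integral>\<^sup>+ t. ennreal ((norm (u t - v t))\<^sup>2) \<partial>lebesgue_on {0..T})"

definition Jk :: "real \<Rightarrow> (real \<Rightarrow> real^'n \<Rightarrow> real^'m \<Rightarrow> real) \<Rightarrow> (real \<Rightarrow> real^'m) \<Rightarrow> (real \<Rightarrow> real^'n) \<Rightarrow> (real \<Rightarrow> real^'m) \<Rightarrow> ennreal" where
  "Jk T j us x u = (\<integral>\<^sup>+ t. ennreal (j t (x t) (u t) + 1/2 * (norm (u t - us t))\<^sup>2) \<partial>lebesgue_on {0..T})"

definition local_solution_P where
  "local_solution_P \<tau> T F0 F1 \<phi> U j \<delta> xs us \<longleftrightarrow>
     feasible T U us \<and> is_state \<tau> T F0 F1 (maxwin \<tau>) \<phi> us xs \<and>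
     (\<forall>x u. feasible T U u \<and> L2sq T u us \<le> ennreal (\<delta>\<^sup>2) \<and> is_state \<tau> T F0 F1 (maxwin \<tau>) \<phi> u x
        \<longrightarrow> Jcost T j xs us \<le> Jcost T j x u)"

definition global_solution_Pk where
  "global_solution_Pk k \<tau> T F0 F1 \<phi> U j \<delta> us xk uk \<longleftrightarrow>
     feasible T U uk \<and> L2sq T uk us \<le> ennreal (\<delta>\<^sup>2) \<and> is_state \<tau> T F0 F1 (LIE k \<tau>) \<phi> uk xk \<and>
     (\<forall>x u. feasible T U u \<and> L2sq T u us \<le> ennreal (\<delta>\<^sup>2) \<and> is_state \<tau> T F0 F1 (LIE k \<tau>) \<phi> u x
        \<longrightarrow> Jk T j us xk uk \<le> Jk T j us x u)"

text \<open>The measure mu_{k,i}(t) = mu_{k,i}(t,s) ds on I_tau.\<close>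
definition muk :: "real \<Rightarrow> nat \<Rightarrow> (real \<Rightarrow> real^'n) \<Rightarrow> real \<Rightarrow> 'n \<Rightarrow> real set \<Rightarrow> real" where
  "muk \<tau> k x t i A = (LINT s:A|lborel. indicator {t-\<tau><..<t} s * exp (real k * x s $ i)
       / integral {t-\<tau>..t} (\<lambda>s'. exp (real k * x s' $ i)))"

text \<open>nu in the convex subdifferential of w \<mapsto> max_{[t-tau,t]} w on C(I_tau) at x_i.\<close>
definition in_subdiff_max :: "real \<Rightarrow> real \<Rightarrow> real \<Rightarrow> (real \<Rightarrow> real) \<Rightarrow> (real set \<Rightarrow> real) \<Rightarrow> bool" where
  "in_subdiff_max \<tau> T t x \<nu> \<longleftrightarrow>
     (\<forall>w. continuous_on {-\<tau>..T} w \<longrightarrow>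
        Sup (w ` {t-\<tau>..t}) \<ge> Sup (x ` {t-\<tau>..t}) + spair {-\<tau>..T} \<nu> (\<lambda>s. w s - x s))"

definition argmax_win :: "real \<Rightarrow> real \<Rightarrow> (real \<Rightarrow> real) \<Rightarrow> real set" where
  "argmax_win \<tau> t x = {s\<in>{t-\<tau>..t}. \<forall>s'\<in>{t-\<tau>..t}. x s' \<le> x s}"

end

theory Submission
  imports Defs
begin

text \<open>Since \<open>\<mu>(t)\<close> is a subgradient of the maximum over \<open>[t - \<tau>, t]\<close> at \<open>x\<^sup>*\<close>, testing the
  subgradient inequality with \<open>w = x\<^sup>* \<plusminus> 1\<close> gives \<open>\<langle>\<mu>(t), 1\<rangle> = 1\<close>, with \<open>w = x\<^sup>* - z\<close>
  for \<open>z \<ge> 0\<close> gives \<open>\<langle>\<mu>(t), z\<rangle> \<ge> 0\<close>, and with \<open>w = x\<^sup>* + \<eta> z\<close>, for a cutoff \<open>z\<close> supported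
  where \<open>x\<^sup>*\<close> stays \<open>\<eta>\<close> below its maximum, gives \<open>\<langle>\<mu>(t), z\<rangle> \<le> 0\<close>. Regularity of
  \<open>\<mu>(t)\<close> and Urysohn cutoffs turn these statements about continuous functions into the
  claims about sets. The pairing itself is integration against the Jordan decomposition
  \<open>(|\<mu>| \<plusminus> \<mu>)/2\<close>, which is a pair of finite measures because a real-valued countably
  additive set function is bounded and its variation is again countably additive.\<close>

section \<open>Borel subsets and their finite partitions\<close>

lemma sigma_algebra_bsets: "sigma_algebra K (bsets K)"
  using sets.sigma_algebra_axioms[of "restrict_space borel K"]
  by (simp add: bsets_def space_restrict_space)

lemma bsets_subset: "A \<in> bsets K \<Longrightarrow> A \<subseteq> K"
  using sets.sets_into_space[of A "restrict_space borel K"]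
  by (simp add: bsets_def space_restrict_space)

lemma bsets_subset_Pow: "bsets K \<subseteq> Pow K"
  using bsets_subset by blast

lemma bsets_top: "K \<in> bsets K"
  using sets.top[of "restrict_space borel K"] by (simp add: bsets_def space_restrict_space)

lemma bsets_empty: "{} \<in> bsets K"
  unfolding bsets_def by auto

lemma bsets_Un: "A \<in> bsets K \<Longrightarrow> B \<in> bsets K \<Longrightarrow> A \<union> B \<in> bsets K"
  unfolding bsets_def by auto

lemma bsets_Int: "A \<in> bsets K \<Longrightarrow> B \<in> bsets K \<Longrightarrow> A \<inter> B \<in> bsets K"
  unfolding bsets_def by auto

lemma bsets_Diff: "A \<in> bsets K \<Longrightarrow> B \<in> bsets K \<Longrightarrow> A - B \<in> bsets K"
  unfolding bsets_def by auto

lemma bsets_finite_Union: "finite P \<Longrightarrow> P \<subseteq> bsets K \<Longrightarrow> \<Union>P \<in> bsets K"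
  unfolding bsets_def by (rule sets.finite_Union)

lemma bsets_countable_UN:
  fixes A :: "nat \<Rightarrow> real set"
  assumes "range A \<subseteq> bsets K"
  shows "\<Union>(range A) \<in> bsets K"
  using assms unfolding bsets_def by (rule sets.countable_UN)

lemma bsets_compact: "compact C \<Longrightarrow> C \<subseteq> K \<Longrightarrow> C \<in> bsets K"
  unfolding bsets_def sets_restrict_space
  by (auto intro!: image_eqI[where x=C] borel_closed compact_imp_closed)

lemma bsets_openin: "openin (top_of_set K) V \<Longrightarrow> V \<in> bsets K"
  unfolding bsets_def sets_restrict_space openin_open by (auto intro: borel_open)

definition borel_partitions :: "real set \<Rightarrow> real set \<Rightarrow> real set set set" where
  "borel_partitions K A = {P. finite P \<and> P \<subseteq> bsets K \<and> disjoint P \<and> \<Union>P = A}"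

lemma tv_eq_SUP_borel_partitions: "tv K \<nu> A = (SUP P \<in> borel_partitions K A. \<Sum>B\<in>P. \<bar>\<nu> B\<bar>)"
  unfolding tv_def borel_partitions_def ..

lemma singleton_in_borel_partitions: "A \<in> bsets K \<Longrightarrow> {A} \<in> borel_partitions K A"
  unfolding borel_partitions_def by auto

lemma borel_partitions_Un:
  assumes "P \<in> borel_partitions K A" "Q \<in> borel_partitions K B" "A \<inter> B = {}"
  shows "P \<union> Q \<in> borel_partitions K (A \<union> B)"
  using assms disjoint_union[of P Q] unfolding borel_partitions_def by auto

section \<open>Finite signed measures\<close>

locale finite_signed_measure =
  fixes K :: "real set" and \<nu> :: "real set \<Rightarrow> real"
  assumes nu_empty: "\<nu> {} = 0"
    and sums_nu: "\<And>A::nat \<Rightarrow> real set. range A \<subseteq> bsets K \<Longrightarrow> disjoint_family A \<Longrightarrow>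
        (\<lambda>n. \<nu> (A n)) sums \<nu> (\<Union>(range A))"

lemma signed_measure_on_imp_finite_signed_measure:
  "signed_measure_on K \<nu> \<Longrightarrow> finite_signed_measure K \<nu>"
  unfolding signed_measure_on_def by unfold_locales auto

context finite_signed_measure
begin

lemma nu_Un_disjoint:
  assumes A: "A \<in> bsets K" and B: "B \<in> bsets K" and AB: "A \<inter> B = {}"
  shows "\<nu> (A \<union> B) = \<nu> A + \<nu> B"
proof -
  define F where "F = (\<lambda>n::nat. if n = 0 then A else if n = 1 then B else {})"
  have "range F \<subseteq> bsets K" using A B bsets_empty by (auto simp: F_def)
  moreover have "disjoint_family F" using AB by (auto simp: disjoint_family_on_def F_def)
  moreover have "\<Union>(range F) = A \<union> B" by (auto simp: F_def split: if_splits)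
  ultimately have "(\<lambda>n. \<nu> (F n)) sums \<nu> (A \<union> B)" using sums_nu by metis
  moreover have "(\<lambda>n. \<nu> (F n)) sums (\<nu> A + \<nu> B)"
    using sums_finite[of "{0, 1}" "\<lambda>n. \<nu> (F n)"] by (simp add: F_def nu_empty)
  ultimately show ?thesis using sums_unique2 by blast
qed

lemma nu_Diff: "A \<in> bsets K \<Longrightarrow> B \<in> bsets K \<Longrightarrow> B \<subseteq> A \<Longrightarrow> \<nu> (A - B) = \<nu> A - \<nu> B"
  using nu_Un_disjoint[of B "A - B"] bsets_Diff[of A K B] by (simp add: Un_absorb1)

lemma nu_Union_finite:
  "finite P \<Longrightarrow> P \<subseteq> bsets K \<Longrightarrow> disjoint P \<Longrightarrow> \<nu> (\<Union>P) = (\<Sum>B\<in>P. \<nu> B)"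
proof (induction P rule: finite_induct)
  case empty
  then show ?case by (simp add: nu_empty)
next
  case (insert X P)
  have "disjoint P" using insert.prems(2) by (simp add: pairwise_insert)
  moreover have "X \<inter> \<Union>P = {}"
    using insert.prems(2) insert.hyps(2) by (auto simp: pairwise_insert disjnt_def)
  ultimately show ?case using insert
    by (simp add: nu_Un_disjoint bsets_finite_Union)
qed

definition unbounded_on :: "real set \<Rightarrow> bool" where
  "unbounded_on E \<longleftrightarrow> E \<in> bsets K \<and> (\<forall>b. \<exists>B\<in>bsets K. B \<subseteq> E \<and> b < \<nu> B)"

lemma unbounded_on_split:
  assumes "unbounded_on E"
  shows "\<exists>E'. unbounded_on E' \<and> E' \<subseteq> E \<and> 1 \<le> \<bar>\<nu> (E - E')\<bar>"
proof -
  have E: "E \<in> bsets K" using assms unbounded_on_def by blast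
  obtain B where B: "B \<in> bsets K" "B \<subseteq> E" "\<bar>\<nu> E\<bar> + 1 < \<nu> B"
    using assms unfolding unbounded_on_def by blast
  show ?thesis
  proof (cases "unbounded_on (E - B)")
    case True
    moreover have "E - (E - B) = B" using B by blast
    ultimately show ?thesis using B by (intro exI[of _ "E - B"]) auto
  next
    case False
    then obtain b where b: "\<And>C. C \<in> bsets K \<Longrightarrow> C \<subseteq> E - B \<Longrightarrow> \<nu> C \<le> b"
      using bsets_Diff[OF E B(1)] unfolding unbounded_on_def by (meson not_less)
    have "unbounded_on B"
      unfolding unbounded_on_def
    proof (intro conjI allI)
      fix c
      obtain C where C: "C \<in> bsets K" "C \<subseteq> E" "c + b < \<nu> C"
        using assms unfolding unbounded_on_def by blast
      have "\<nu> C = \<nu> (C \<inter> B) + \<nu> (C - B)"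
        using nu_Un_disjoint[of "C \<inter> B" "C - B"] C B bsets_Int bsets_Diff
        by (metis Int_Diff_Un Int_Diff_disjoint)
      moreover have "\<nu> (C - B) \<le> b" using b[of "C - B"] C B bsets_Diff by blast
      ultimately show "\<exists>B'\<in>bsets K. B' \<subseteq> B \<and> c < \<nu> B'"
        using C B bsets_Int by (intro bexI[of _ "C \<inter> B"]) auto
    qed (rule B(1))
    moreover have "\<nu> (E - B) = \<nu> E - \<nu> B" using nu_Diff E B by blast
    ultimately show ?thesis using B by (intro exI[of _ B]) auto
  qed
qed

text \<open>Iterating \<open>unbounded_on_split\<close> gives a decreasing sequence of sets whose successive
  differences are disjoint and all have \<open>\<bar>\<nu>\<bar> \<ge> 1\<close>, contradicting convergence of \<open>\<Sum> \<nu>\<close>.\<close>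

lemma bdd_above_nu: "\<exists>b. \<forall>B\<in>bsets K. \<nu> B \<le> b"
proof (rule ccontr)
  assume "\<not> ?thesis"
  then have "unbounded_on K"
    unfolding unbounded_on_def using bsets_top bsets_subset by (meson not_le)
  obtain g where g: "\<And>E. unbounded_on E \<Longrightarrow>
      unbounded_on (g E) \<and> g E \<subseteq> E \<and> 1 \<le> \<bar>\<nu> (E - g E)\<bar>"
    using unbounded_on_split by metis
  define S where "S n = (g ^^ n) K" for n
  have S: "unbounded_on (S n)" for n
    by (induction n) (auto simp: S_def \<open>unbounded_on K\<close> g)
  have S_Suc: "S (Suc n) = g (S n)" for n
    by (simp add: S_def)
  define F where "F n = (K - S (Suc n)) - (K - S n)" for n
    \<comment> \<open>differences of the increasing complements, so that \<open>disjoint_family_Suc\<close> applies\<close>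
  have F: "F n = S n - S (Suc n)" for n
    using S[of n] g[OF S[of n]] bsets_subset by (auto simp: F_def S_Suc unbounded_on_def)
  have "disjoint_family F"
    unfolding F_def using g[OF S] by (intro disjoint_family_Suc) (auto simp: S_Suc)
  moreover have "range F \<subseteq> bsets K"
    using S bsets_Diff unfolding F unbounded_on_def by blast
  ultimately have "(\<lambda>n. \<nu> (F n)) \<longlonglongrightarrow> 0"
    using sums_nu sums_summable summable_LIMSEQ_zero by blast
  then obtain N where "\<And>n. n \<ge> N \<Longrightarrow> \<bar>\<nu> (F n)\<bar> < 1"
    using LIMSEQ_D[of _ 0 1] by fastforce
  then have "\<bar>\<nu> (F N)\<bar> < 1" by blast
  with g[OF S[of N]] show False by (simp add: F S_Suc)
qed

lemma finite_signed_measure_uminus: "finite_signed_measure K (\<lambda>A. - \<nu> A)"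
  by unfold_locales (auto simp: nu_empty intro: sums_minus sums_nu)

lemma bounded_nu: "\<exists>S. \<forall>B\<in>bsets K. \<bar>\<nu> B\<bar> \<le> S"
proof -
  obtain b1 where "\<forall>B\<in>bsets K. \<nu> B \<le> b1" using bdd_above_nu by blast
  moreover obtain b2 where "\<forall>B\<in>bsets K. - \<nu> B \<le> b2"
    using finite_signed_measure.bdd_above_nu[OF finite_signed_measure_uminus] by blast
  ultimately show ?thesis by (intro exI[of _ "max b1 b2"]) (auto simp: abs_if)
qed

lemma sum_abs_le_twice_bound:
  assumes bound: "\<And>B. B \<in> bsets K \<Longrightarrow> \<bar>\<nu> B\<bar> \<le> S"
    and P: "finite P" "P \<subseteq> bsets K" "disjoint P"
  shows "(\<Sum>B\<in>P. \<bar>\<nu> B\<bar>) \<le> 2 * S"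
proof -
  define Pp where "Pp = {B\<in>P. 0 \<le> \<nu> B}"
  define Pn where "Pn = {B\<in>P. \<nu> B < 0}"
  have sub: "Pp \<subseteq> P" "Pn \<subseteq> P" by (auto simp: Pp_def Pn_def)
  then have fin: "finite Pp" "finite Pn" and bs: "Pp \<subseteq> bsets K" "Pn \<subseteq> bsets K"
    and disj: "disjoint Pp" "disjoint Pn"
    using P finite_subset pairwise_subset by blast+
  have "(\<Sum>B\<in>P. \<bar>\<nu> B\<bar>) = (\<Sum>B\<in>Pp. \<bar>\<nu> B\<bar>) + (\<Sum>B\<in>Pn. \<bar>\<nu> B\<bar>)"
    using P(1) by (subst sum.union_disjoint[symmetric]) (auto simp: Pp_def Pn_def intro: sum.cong)
  also have "\<dots> = (\<Sum>B\<in>Pp. \<nu> B) - (\<Sum>B\<in>Pn. \<nu> B)"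
    by (simp add: Pp_def Pn_def sum_negf[symmetric])
  also have "\<dots> = \<nu> (\<Union>Pp) - \<nu> (\<Union>Pn)"
    using fin bs disj by (simp add: nu_Union_finite)
  also have "\<dots> \<le> 2 * S"
    using fin bs bound[of "\<Union>Pp"] bound[of "\<Union>Pn"] bsets_finite_Union by simp
  finally show ?thesis .
qed

lemma bdd_above_partition_sums: "bdd_above ((\<lambda>P. \<Sum>B\<in>P. \<bar>\<nu> B\<bar>) ` borel_partitions K A)"
proof -
  obtain S where "\<forall>B\<in>bsets K. \<bar>\<nu> B\<bar> \<le> S" using bounded_nu by blast
  then show ?thesis
    using sum_abs_le_twice_bound[of S]
    by (intro bdd_aboveI[of _ "2 * S"]) (auto simp: borel_partitions_def)
qed

lemma partition_sum_le_tv: "P \<in> borel_partitions K A \<Longrightarrow> (\<Sum>B\<in>P. \<bar>\<nu> B\<bar>) \<le> tv K \<nu> A"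
  unfolding tv_eq_SUP_borel_partitions by (rule cSUP_upper[OF _ bdd_above_partition_sums])

lemma abs_nu_le_tv: "A \<in> bsets K \<Longrightarrow> \<bar>\<nu> A\<bar> \<le> tv K \<nu> A"
  using partition_sum_le_tv[OF singleton_in_borel_partitions] by simp

lemma tv_nonneg: "A \<in> bsets K \<Longrightarrow> 0 \<le> tv K \<nu> A"
  using abs_nu_le_tv[of A] by linarith

lemma sum_abs_Int_le_tv:
  assumes R: "finite R" "R \<subseteq> bsets K" "disjoint R" and A: "A \<in> bsets K" "A \<subseteq> \<Union>R"
  shows "(\<Sum>X\<in>R. \<bar>\<nu> (X \<inter> A)\<bar>) \<le> tv K \<nu> A"
proof -
  let ?h = "\<lambda>X. X \<inter> A"
  have "disjoint (?h ` R)"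
    using R(3) by (auto simp: pairwise_image pairwise_def disjnt_def)
  then have "?h ` R \<in> borel_partitions K A"
    using R A bsets_Int unfolding borel_partitions_def by auto
  moreover have "(\<Sum>Y\<in>?h ` R. \<bar>\<nu> Y\<bar>) = (\<Sum>X\<in>R. \<bar>\<nu> (X \<inter> A)\<bar>)"
  proof (rule sum.reindex_nontrivial[OF R(1), unfolded comp_def])
    fix X Y assume "X \<in> R" "Y \<in> R" "X \<noteq> Y" "X \<inter> A = Y \<inter> A"
    with R(3) have "X \<inter> A = {}" by (auto simp: pairwise_def disjnt_def)
    then show "\<bar>\<nu> (X \<inter> A)\<bar> = 0" by (simp add: nu_empty)
  qed
  ultimately show ?thesis using partition_sum_le_tv by metis
qed

lemma tv_Un_disjoint:
  assumes A: "A \<in> bsets K" and B: "B \<in> bsets K" and AB: "A \<inter> B = {}"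
  shows "tv K \<nu> (A \<union> B) = tv K \<nu> A + tv K \<nu> B"
proof (rule antisym)
  show "tv K \<nu> (A \<union> B) \<le> tv K \<nu> A + tv K \<nu> B"
    unfolding tv_eq_SUP_borel_partitions[of K \<nu> "A \<union> B"]
  proof (rule cSUP_least)
    show "borel_partitions K (A \<union> B) \<noteq> {}"
      using singleton_in_borel_partitions bsets_Un[OF A B] by blast
    fix R assume "R \<in> borel_partitions K (A \<union> B)"
    then have R: "finite R" "R \<subseteq> bsets K" "disjoint R" "\<Union>R = A \<union> B"
      unfolding borel_partitions_def by auto
    have "\<nu> X = \<nu> (X \<inter> A) + \<nu> (X \<inter> B)" if "X \<in> R" for X
    proof -
      have X: "X \<in> bsets K" using that R(2) by blast
      have "X = (X \<inter> A) \<union> (X \<inter> B)" using that R(4) by blast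
      moreover have "(X \<inter> A) \<inter> (X \<inter> B) = {}" using AB by blast
      ultimately show ?thesis using nu_Un_disjoint bsets_Int[OF X A] bsets_Int[OF X B] by metis
    qed
    then have "(\<Sum>X\<in>R. \<bar>\<nu> X\<bar>) \<le> (\<Sum>X\<in>R. \<bar>\<nu> (X \<inter> A)\<bar>) + (\<Sum>X\<in>R. \<bar>\<nu> (X \<inter> B)\<bar>)"
      by (simp add: sum.distrib[symmetric] sum_mono)
    also have "\<dots> \<le> tv K \<nu> A + tv K \<nu> B"
      using sum_abs_Int_le_tv[OF R(1-3)] A B R(4) by (intro add_mono) auto
    finally show "(\<Sum>X\<in>R. \<bar>\<nu> X\<bar>) \<le> tv K \<nu> A + tv K \<nu> B" .
  qed
next
  have partition_sums: "(\<Sum>X\<in>P. \<bar>\<nu> X\<bar>) + (\<Sum>X\<in>Q. \<bar>\<nu> X\<bar>) \<le> tv K \<nu> (A \<union> B)"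
    if P: "P \<in> borel_partitions K A" and Q: "Q \<in> borel_partitions K B" for P Q
  proof -
    have "finite P" "finite Q" "\<Union>P = A" "\<Union>Q = B"
      using P Q unfolding borel_partitions_def by auto
    moreover have "(\<Sum>X\<in>P \<inter> Q. \<bar>\<nu> X\<bar>) = 0"
    proof (rule sum.neutral, rule ballI)
      fix X assume "X \<in> P \<inter> Q"
      then have "X = {}" using AB \<open>\<Union>P = A\<close> \<open>\<Union>Q = B\<close> by blast
      then show "\<bar>\<nu> X\<bar> = 0" by (simp add: nu_empty)
    qed
    ultimately have "(\<Sum>X\<in>P \<union> Q. \<bar>\<nu> X\<bar>) = (\<Sum>X\<in>P. \<bar>\<nu> X\<bar>) + (\<Sum>X\<in>Q. \<bar>\<nu> X\<bar>)"
      by (simp add: sum_Un)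
    then show ?thesis
      using partition_sum_le_tv[OF borel_partitions_Un[OF P Q AB]] by simp
  qed
  have "tv K \<nu> B \<le> tv K \<nu> (A \<union> B) - tv K \<nu> A"
    unfolding tv_eq_SUP_borel_partitions[of K \<nu> B]
  proof (rule cSUP_least)
    show "borel_partitions K B \<noteq> {}" using singleton_in_borel_partitions B by blast
    fix Q assume Q: "Q \<in> borel_partitions K B"
    have "tv K \<nu> A \<le> tv K \<nu> (A \<union> B) - (\<Sum>X\<in>Q. \<bar>\<nu> X\<bar>)"
      unfolding tv_eq_SUP_borel_partitions[of K \<nu> A]
    proof (rule cSUP_least)
      show "borel_partitions K A \<noteq> {}" using singleton_in_borel_partitions A by blast
      fix P assume "P \<in> borel_partitions K A"
      from partition_sums[OF this Q]
      show "(\<Sum>X\<in>P. \<bar>\<nu> X\<bar>) \<le> tv K \<nu> (A \<union> B) - (\<Sum>X\<in>Q. \<bar>\<nu> X\<bar>)" by simp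
    qed
    then show "(\<Sum>X\<in>Q. \<bar>\<nu> X\<bar>) \<le> tv K \<nu> (A \<union> B) - tv K \<nu> A" by simp
  qed
  then show "tv K \<nu> A + tv K \<nu> B \<le> tv K \<nu> (A \<union> B)" by simp
qed

lemma tv_Diff:
  assumes "A \<in> bsets K" "B \<in> bsets K" "B \<subseteq> A"
  shows "tv K \<nu> (A - B) = tv K \<nu> A - tv K \<nu> B"
  using tv_Un_disjoint[of B "A - B"] assms bsets_Diff by (simp add: Un_absorb1)

lemma tv_mono: "A \<in> bsets K \<Longrightarrow> B \<in> bsets K \<Longrightarrow> B \<subseteq> A \<Longrightarrow> tv K \<nu> B \<le> tv K \<nu> A"
  using tv_Diff[of A B] tv_nonneg[of "A - B"] bsets_Diff by fastforce

lemma tv_empty: "tv K \<nu> {} = 0"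
  using tv_Un_disjoint[OF bsets_empty bsets_empty] by simp

lemma tv_eq_nu_if_nonneg:
  assumes nonneg: "\<And>B. B \<in> bsets K \<Longrightarrow> 0 \<le> \<nu> B" and A: "A \<in> bsets K"
  shows "tv K \<nu> A = \<nu> A"
proof -
  have "(\<Sum>B\<in>P. \<bar>\<nu> B\<bar>) = \<nu> A" if "P \<in> borel_partitions K A" for P
    using that nonneg nu_Union_finite unfolding borel_partitions_def
    by (auto intro!: sum.cong simp: subset_iff)
  then have "tv K \<nu> A = (SUP P\<in>borel_partitions K A. \<nu> A)"
    unfolding tv_eq_SUP_borel_partitions by (intro SUP_cong) auto
  also have "\<dots> = \<nu> A" using singleton_in_borel_partitions[OF A] by (intro cSUP_const) auto
  finally show ?thesis .
qed

lemma tv_UN_lessThan: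
  fixes A :: "nat \<Rightarrow> real set"
  assumes A: "range A \<subseteq> bsets K" "disjoint_family A"
  shows "tv K \<nu> (\<Union>i<m. A i) = (\<Sum>i<m. tv K \<nu> (A i))"
proof (induction m)
  case 0
  show ?case by (simp add: tv_empty)
next
  case (Suc m)
  have "A i \<inter> A m = {}" if "i < m" for i
    using A(2) that unfolding disjoint_family_on_def by (metis UNIV_I nat_neq_iff)
  then have "(\<Union>i<m. A i) \<inter> A m = {}" by blast
  moreover have "(\<Union>i<m. A i) \<in> bsets K" using A(1) by (intro bsets_finite_Union) auto
  moreover have "A m \<in> bsets K" using A(1) by blast
  ultimately show ?case
    using Suc tv_Un_disjoint[of "\<Union>i<m. A i" "A m"] by (simp add: lessThan_Suc Un_commute add.commute)
qed

lemma sums_tv: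
  fixes A :: "nat \<Rightarrow> real set"
  assumes A: "range A \<subseteq> bsets K" and disj: "disjoint_family A"
  shows "(\<lambda>n. tv K \<nu> (A n)) sums tv K \<nu> (\<Union>(range A))"
proof -
  define U where "U = \<Union>(range A)"
  have U: "U \<in> bsets K" unfolding U_def using A by (rule bsets_countable_UN)
  have An: "A n \<in> bsets K" for n using A by auto
  have partial: "(\<Sum>i<m. tv K \<nu> (A i)) \<le> tv K \<nu> U" for m
  proof -
    have "(\<Union>i<m. A i) \<in> bsets K" using A by (intro bsets_finite_Union) auto
    moreover have "(\<Union>i<m. A i) \<subseteq> U" unfolding U_def by blast
    ultimately have "tv K \<nu> (\<Union>i<m. A i) \<le> tv K \<nu> U" by (rule tv_mono[OF U])
    then show ?thesis by (simp only: tv_UN_lessThan[OF A disj])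
  qed
  have summable: "summable (\<lambda>n. tv K \<nu> (A n))"
    by (rule summableI_nonneg_bounded[OF tv_nonneg[OF An] partial])
  have "(\<Sum>n. tv K \<nu> (A n)) \<le> tv K \<nu> U"
    by (rule suminf_le_const[OF summable partial])
  moreover have "tv K \<nu> U \<le> (\<Sum>n. tv K \<nu> (A n))"
    unfolding tv_eq_SUP_borel_partitions[of K \<nu> U]
  proof (rule cSUP_least)
    show "borel_partitions K U \<noteq> {}" using singleton_in_borel_partitions U by blast
    fix R assume "R \<in> borel_partitions K U"
    then have R: "finite R" "R \<subseteq> bsets K" "disjoint R" "\<Union>R = U"
      unfolding borel_partitions_def by auto
    have summable_X: "summable (\<lambda>n. \<bar>\<nu> (X \<inter> A n)\<bar>)" if X: "X \<in> R" for X
    proof (rule summable_comparison_test[OF _ summable])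
      have "\<bar>\<nu> (X \<inter> A n)\<bar> \<le> tv K \<nu> (A n)" for n
      proof -
        have "X \<inter> A n \<in> bsets K" using X R(2) An bsets_Int by blast
        then show ?thesis
          using abs_nu_le_tv tv_mono[OF An, of "X \<inter> A n"] by (meson Int_lower2 order_trans)
      qed
      then show "\<exists>N. \<forall>n\<ge>N. norm \<bar>\<nu> (X \<inter> A n)\<bar> \<le> tv K \<nu> (A n)" by auto
    qed
    have "(\<Sum>X\<in>R. \<bar>\<nu> X\<bar>) \<le> (\<Sum>X\<in>R. \<Sum>n. \<bar>\<nu> (X \<inter> A n)\<bar>)"
    proof (rule sum_mono)
      fix X assume X: "X \<in> R"
      have "range (\<lambda>n. X \<inter> A n) \<subseteq> bsets K" using X R An bsets_Int by blast
      moreover have "disjoint_family (\<lambda>n. X \<inter> A n)"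
        using disj unfolding disjoint_family_on_def by blast
      moreover have "(\<Union>n. X \<inter> A n) = X" using X R(4) unfolding U_def by blast
      ultimately have "(\<lambda>n. \<nu> (X \<inter> A n)) sums \<nu> X" using sums_nu by metis
      then show "\<bar>\<nu> X\<bar> \<le> (\<Sum>n. \<bar>\<nu> (X \<inter> A n)\<bar>)"
        using summable_rabs[OF summable_X[OF X]] by (simp add: sums_iff)
    qed
    also have "\<dots> = (\<Sum>n. \<Sum>X\<in>R. \<bar>\<nu> (X \<inter> A n)\<bar>)"
      using summable_X by (rule suminf_sum[symmetric])
    also have "\<dots> \<le> (\<Sum>n. tv K \<nu> (A n))"
    proof (rule suminf_le)
      show "(\<Sum>X\<in>R. \<bar>\<nu> (X \<inter> A n)\<bar>) \<le> tv K \<nu> (A n)" for n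
        using sum_abs_Int_le_tv[OF R(1-3) An[of n]] R(4) unfolding U_def by blast
      show "summable (\<lambda>n. \<Sum>X\<in>R. \<bar>\<nu> (X \<inter> A n)\<bar>)"
        using summable_X by (intro summable_sum) auto
    qed (rule summable)
    finally show "(\<Sum>X\<in>R. \<bar>\<nu> X\<bar>) \<le> (\<Sum>n. tv K \<nu> (A n))" .
  qed
  ultimately have "tv K \<nu> U = (\<Sum>n. tv K \<nu> (A n))" by (rule antisym[rotated])
  with summable_sums[OF summable] show ?thesis unfolding U_def by simp
qed

lemma regular_sm_inner_approx:
  assumes "regular_sm K \<nu>" and A: "A \<in> bsets K" and "0 < e"
  obtains C where "compact C" "C \<subseteq> A" "tv K \<nu> (A - C) < e"
proof -
  let ?C = "{C. compact C \<and> C \<subseteq> A}"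
  have C_bsets: "C \<in> bsets K" if "C \<in> ?C" for C
    using that bsets_compact bsets_subset[OF A] by blast
  have ne: "?C \<noteq> {}" by auto
  have bdd: "bdd_above (tv K \<nu> ` ?C)"
    using C_bsets tv_mono A by (intro bdd_aboveI[of _ "tv K \<nu> A"]) auto
  have "tv K \<nu> A = (SUP C \<in> ?C. tv K \<nu> C)"
    using assms(1) A unfolding regular_sm_def by blast
  then have "tv K \<nu> A - e < (SUP C \<in> ?C. tv K \<nu> C)"
    using assms(3) by linarith
  then obtain C where C: "C \<in> ?C" "tv K \<nu> A - e < tv K \<nu> C"
    unfolding less_cSUP_iff[OF ne bdd] ..
  moreover have "tv K \<nu> (A - C) = tv K \<nu> A - tv K \<nu> C"
    using C(1) C_bsets A by (intro tv_Diff) auto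
  ultimately show ?thesis using that by auto
qed

lemma regular_sm_outer_approx:
  assumes "regular_sm K \<nu>" and A: "A \<in> bsets K" and "0 < e"
  obtains V where "openin (top_of_set K) V" "A \<subseteq> V" "tv K \<nu> (V - A) < e"
proof -
  let ?V = "{V. openin (top_of_set K) V \<and> A \<subseteq> V}"
  have V_bsets: "V \<in> bsets K" if "V \<in> ?V" for V
    using that bsets_openin by blast
  have "K \<in> ?V" using bsets_subset[OF A] by auto
  then have ne: "?V \<noteq> {}" by blast
  have bdd: "bdd_below (tv K \<nu> ` ?V)"
    using V_bsets tv_nonneg by (intro bdd_belowI[of _ 0]) auto
  have "tv K \<nu> A = (INF V \<in> ?V. tv K \<nu> V)"
    using assms(1) A unfolding regular_sm_def by blast
  then have "(INF V \<in> ?V. tv K \<nu> V) < tv K \<nu> A + e"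
    using assms(3) by linarith
  then obtain V where V: "V \<in> ?V" "tv K \<nu> V < tv K \<nu> A + e"
    unfolding cINF_less_iff[OF ne bdd] ..
  moreover have "tv K \<nu> (V - A) = tv K \<nu> V - tv K \<nu> A"
    using V(1) V_bsets A by (intro tv_Diff) auto
  ultimately show ?thesis using that by auto
qed

end

section \<open>Jordan decomposition and the duality pairing\<close>

lemma sets_measure_of_bsets: "sets (measure_of K (bsets K) f) = bsets K"
  using bsets_subset_Pow sigma_algebra.sigma_sets_eq[OF sigma_algebra_bsets]
  by (simp add: sets_measure_of)

lemma space_measure_of_bsets: "space (measure_of K (bsets K) f) = K"
  using bsets_subset_Pow by (simp add: space_measure_of)

lemma emeasure_measure_of_bsets:
  fixes g :: "real set \<Rightarrow> real"
  assumes nonneg: "\<And>A. A \<in> bsets K \<Longrightarrow> 0 \<le> g A" and "g {} = 0"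
    and sums_g: "\<And>A::nat \<Rightarrow> real set. range A \<subseteq> bsets K \<Longrightarrow> disjoint_family A \<Longrightarrow>
        (\<lambda>n. g (A n)) sums g (\<Union>(range A))"
    and A: "A \<in> bsets K"
  shows "emeasure (measure_of K (bsets K) (\<lambda>A. ennreal (g A))) A = ennreal (g A)"
proof (rule emeasure_measure_of_sigma[OF sigma_algebra_bsets _ _ A])
  show "positive (bsets K) (\<lambda>A. ennreal (g A))"
    unfolding positive_def by (simp add: \<open>g {} = 0\<close>)
  show "countably_additive (bsets K) (\<lambda>A. ennreal (g A))"
    unfolding countably_additive_def
  proof (intro allI impI)
    fix F :: "nat \<Rightarrow> real set"
    assume F: "range F \<subseteq> bsets K" "disjoint_family F"
    then have "(\<lambda>n. g (F n)) sums g (\<Union>(range F))" by (rule sums_g)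
    with F(1) nonneg show "(\<Sum>i. ennreal (g (F i))) = ennreal (g (\<Union>(range F)))"
      by (subst suminf_ennreal2) (auto simp: sums_iff)
  qed
qed

lemma tv_uminus [simp]: "tv K (\<lambda>A. - \<nu> A) = tv K \<nu>"
  unfolding tv_def by simp

lemma sm_neg_eq_sm_pos_uminus: "sm_neg K \<nu> = sm_pos K (\<lambda>A. - \<nu> A)"
  unfolding sm_neg_def sm_pos_def by simp

lemma sets_sm_pos [simp]: "sets (sm_pos K \<nu>) = bsets K"
  and space_sm_pos [simp]: "space (sm_pos K \<nu>) = K"
  unfolding sm_pos_def by (simp_all add: sets_measure_of_bsets space_measure_of_bsets)

lemma sets_sm_neg [simp]: "sets (sm_neg K \<nu>) = bsets K"
  and space_sm_neg [simp]: "space (sm_neg K \<nu>) = K"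
  by (simp_all add: sm_neg_eq_sm_pos_uminus)

lemma spair_cmult: "spair K \<nu> (\<lambda>s. c * z s) = c * spair K \<nu> z"
  unfolding spair_def by (simp add: right_diff_distrib)

definition cutoff :: "real set \<Rightarrow> real set \<Rightarrow> real set \<Rightarrow> (real \<Rightarrow> real) \<Rightarrow> bool" where
  "cutoff K C V f \<longleftrightarrow> continuous_on K f \<and> (\<forall>s\<in>K. 0 \<le> f s \<and> f s \<le> 1) \<and>
     (\<forall>s\<in>C. f s = 1) \<and> (\<forall>s\<in>K - V. f s = 0)"

lemma cutoff_exists:
  assumes "compact C" "C \<subseteq> V" "openin (top_of_set K) V"
  obtains f where "cutoff K C V f"
proof -
  have "V \<subseteq> K" using assms(3) by (rule openin_imp_subset)
  then have "closedin (top_of_set K) C"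
    using assms(1,2) by (intro closed_subset compact_imp_closed) auto
  moreover have "closedin (top_of_set K) (K - V)"
    using closedin_diff[OF closedin_topspace assms(3)] by simp
  moreover have "C \<inter> (K - V) = {}" using assms(2) by blast
  ultimately obtain f :: "real \<Rightarrow> real" where f: "continuous_on K f"
    "\<And>s. s \<in> K \<Longrightarrow> f s \<in> closed_segment 1 0" "\<And>s. s \<in> C \<Longrightarrow> f s = 1" "\<And>s. s \<in> K - V \<Longrightarrow> f s = 0"
    by (rule Urysohn_local[where a=1 and b=0]) auto
  then show ?thesis
    by (intro that) (auto simp: cutoff_def closed_segment_eq_real_ivl)
qed

lemma
  fixes M :: "real measure"
  assumes M: "finite_measure M" "sets M = bsets K" "space M = K"
    and f: "cutoff K C V f" and C: "C \<in> bsets K" and V: "V \<in> bsets K"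
  shows integral_cutoff_le_measure: "integral\<^sup>L M f \<le> measure M V"
    and measure_le_integral_cutoff: "measure M C \<le> integral\<^sup>L M f"
proof -
  interpret finite_measure M by (rule M(1))
  have "f \<in> borel_measurable (restrict_space borel K)"
    using f unfolding cutoff_def by (intro borel_measurable_continuous_on_restrict) auto
  then have "f \<in> borel_measurable M"
    using M(2) by (simp add: bsets_def cong: measurable_cong_sets)
  then have int_f: "integrable M f"
    using f M(3) unfolding cutoff_def by (intro integrable_const_bound[where B=1]) auto
  have int_ind: "integrable M (indicator A :: real \<Rightarrow> real)" if "A \<in> bsets K" for A
    using that M(2) by (intro integrable_real_indicator) (auto simp: less_top[symmetric])
  have "integral\<^sup>L M f \<le> integral\<^sup>L M (indicator V)"
    using f M(3) by (intro integral_mono[OF int_f int_ind[OF V]]) (auto simp: cutoff_def indicator_def)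
  then show "integral\<^sup>L M f \<le> measure M V"
    using V M bsets_subset by (simp add: Int_absorb2)
  have "integral\<^sup>L M (indicator C) \<le> integral\<^sup>L M f"
    using f M(3) C bsets_subset
    by (intro integral_mono[OF int_ind[OF C] int_f]) (auto simp: cutoff_def indicator_def)
  then show "measure M C \<le> integral\<^sup>L M f"
    using C M bsets_subset by (simp add: Int_absorb2)
qed

context finite_signed_measure
begin

lemma emeasure_sm_pos:
  "A \<in> bsets K \<Longrightarrow> emeasure (sm_pos K \<nu>) A = ennreal ((tv K \<nu> A + \<nu> A) / 2)"
  unfolding sm_pos_def
proof (rule emeasure_measure_of_bsets)
  show "0 \<le> (tv K \<nu> B + \<nu> B) / 2" if "B \<in> bsets K" for B
    using abs_le_D2[OF abs_nu_le_tv[OF that]] by simp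
qed (auto simp: tv_empty nu_empty intro!: sums_divide sums_add sums_tv sums_nu)

lemma finite_measure_sm_pos: "finite_measure (sm_pos K \<nu>)"
  by (rule finite_measureI) (simp add: emeasure_sm_pos bsets_top)

lemma measure_sm_pos: "A \<in> bsets K \<Longrightarrow> measure (sm_pos K \<nu>) A = (tv K \<nu> A + \<nu> A) / 2"
  using abs_nu_le_tv[of A] by (simp add: measure_def emeasure_sm_pos)

lemma finite_measure_sm_neg: "finite_measure (sm_neg K \<nu>)"
  unfolding sm_neg_eq_sm_pos_uminus
  by (rule finite_signed_measure.finite_measure_sm_pos[OF finite_signed_measure_uminus])

lemma measure_sm_neg: "A \<in> bsets K \<Longrightarrow> measure (sm_neg K \<nu>) A = (tv K \<nu> A - \<nu> A) / 2"
  unfolding sm_neg_eq_sm_pos_uminus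
  using finite_signed_measure.measure_sm_pos[OF finite_signed_measure_uminus] by simp

lemma spair_const_one: "spair K \<nu> (\<lambda>s. 1) = \<nu> K"
  unfolding spair_def sm_neg_eq_sm_pos_uminus
  using measure_sm_pos[OF bsets_top]
    finite_signed_measure.measure_sm_pos[OF finite_signed_measure_uminus bsets_top]
  by (simp add: field_simps)

lemma spair_cutoff_le:
  assumes f: "cutoff K C V f" and CV: "C \<in> bsets K" "V \<in> bsets K" "C \<subseteq> V"
  shows "spair K \<nu> f \<le> \<nu> C + tv K \<nu> (V - C)"
proof -
  have "spair K \<nu> f \<le> measure (sm_pos K \<nu>) V - measure (sm_neg K \<nu>) C"
    unfolding spair_def
    using integral_cutoff_le_measure[OF finite_measure_sm_pos sets_sm_pos space_sm_pos f CV(1,2)]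
      measure_le_integral_cutoff[OF finite_measure_sm_neg sets_sm_neg space_sm_neg f CV(1,2)]
    by linarith
  moreover have "\<nu> (V - C) \<le> tv K \<nu> (V - C)"
    using abs_nu_le_tv[of "V - C"] CV bsets_Diff by fastforce
  ultimately show ?thesis
    using CV measure_sm_pos measure_sm_neg tv_Diff[OF CV(2,1,3)] nu_Diff[OF CV(2,1,3)]
    by (simp add: field_simps)
qed

lemma spair_cutoff_ge:
  assumes f: "cutoff K C V f" and CV: "C \<in> bsets K" "V \<in> bsets K"
  shows "(tv K \<nu> C + \<nu> C) / 2 - (tv K \<nu> V - \<nu> V) / 2 \<le> spair K \<nu> f"
  unfolding spair_def
  using measure_le_integral_cutoff[OF finite_measure_sm_pos sets_sm_pos space_sm_pos f CV(1,2)]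
    integral_cutoff_le_measure[OF finite_measure_sm_neg sets_sm_neg space_sm_neg f CV(1,2)]
    measure_sm_pos[OF CV(1)] measure_sm_neg[OF CV(2)]
  by linarith

end

section \<open>Subgradients of the maximum over a window\<close>

locale window_max_subgradient = finite_signed_measure K \<nu>
  for K :: "real set" and \<nu> :: "real set \<Rightarrow> real" +
  fixes W :: "real set" and x :: "real \<Rightarrow> real"
  assumes regular: "regular_sm K \<nu>"
    and compact_W: "compact W" and W_nonempty: "W \<noteq> {}" and W_subset: "W \<subseteq> K"
    and continuous_x: "continuous_on K x"
    and subgradient: "\<And>w. continuous_on K w \<Longrightarrow>
        Sup (x ` W) + spair K \<nu> (\<lambda>s. w s - x s) \<le> Sup (w ` W)"
begin

lemma x_le_Sup: "s \<in> W \<Longrightarrow> x s \<le> Sup (x ` W)"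
proof (rule cSup_upper)
  show "bdd_above (x ` W)"
    using compact_continuous_image[OF continuous_on_subset[OF continuous_x W_subset] compact_W]
    by (intro bounded_imp_bdd_above compact_imp_bounded)
qed simp

lemma spair_diff_le:
  assumes "continuous_on K w" "\<And>s. s \<in> W \<Longrightarrow> w s \<le> B"
  shows "spair K \<nu> (\<lambda>s. w s - x s) \<le> B - Sup (x ` W)"
proof -
  have "Sup (w ` W) \<le> B" using W_nonempty assms(2) by (intro cSup_least) auto
  then show ?thesis using subgradient[OF assms(1)] by linarith
qed

lemma spair_nonneg:
  assumes "continuous_on K z" "\<And>s. s \<in> K \<Longrightarrow> 0 \<le> z s"
  shows "0 \<le> spair K \<nu> z"
proof -
  have "spair K \<nu> (\<lambda>s. (x s - z s) - x s) \<le> Sup (x ` W) - Sup (x ` W)"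
    using assms W_subset x_le_Sup
    by (intro spair_diff_le continuous_intros continuous_x) force+
  then show ?thesis using spair_cmult[of K \<nu> "-1" z] by simp
qed

lemma nu_nonneg:
  assumes A: "A \<in> bsets K"
  shows "0 \<le> \<nu> A"
proof (rule ccontr)
  assume "\<not> 0 \<le> \<nu> A"
  then have a: "0 < - \<nu> A / 4" by simp
  obtain C where C: "compact C" "C \<subseteq> A" "tv K \<nu> (A - C) < - \<nu> A / 4"
    using regular_sm_inner_approx[OF regular A a] .
  have CK: "C \<in> bsets K" using C bsets_compact bsets_subset[OF A] by blast
  obtain V where V: "openin (top_of_set K) V" "C \<subseteq> V" "tv K \<nu> (V - C) < - \<nu> A / 4"
    using regular_sm_outer_approx[OF regular CK a] .
  obtain f where f: "cutoff K C V f"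
    using cutoff_exists[OF C(1) V(2,1)] .
  have "\<nu> C = \<nu> A - \<nu> (A - C)" using nu_Diff[OF A CK C(2)] by simp
  moreover have "- \<nu> (A - C) \<le> tv K \<nu> (A - C)"
    using abs_le_D2[OF abs_nu_le_tv] bsets_Diff[OF A CK] by blast
  moreover have "spair K \<nu> f \<le> \<nu> C + tv K \<nu> (V - C)"
    by (rule spair_cutoff_le[OF f CK bsets_openin[OF V(1)] V(2)])
  moreover have "0 \<le> spair K \<nu> f"
    using f by (intro spair_nonneg) (auto simp: cutoff_def)
  ultimately show False using C(3) V(3) a by linarith
qed

lemma tv_eq_nu: "A \<in> bsets K \<Longrightarrow> tv K \<nu> A = \<nu> A"
  using tv_eq_nu_if_nonneg nu_nonneg by blast

lemma nu_space_eq_1: "\<nu> K = 1"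
proof -
  have "spair K \<nu> (\<lambda>s. (x s + 1) - x s) \<le> (Sup (x ` W) + 1) - Sup (x ` W)"
    using x_le_Sup by (intro spair_diff_le continuous_intros continuous_x) auto
  moreover have "spair K \<nu> (\<lambda>s. (x s - 1) - x s) \<le> (Sup (x ` W) - 1) - Sup (x ` W)"
    using x_le_Sup by (intro spair_diff_le continuous_intros continuous_x) auto
  ultimately show ?thesis
    using spair_const_one spair_cmult[of K \<nu> "-1" "\<lambda>s. 1"] by simp
qed

lemma below_Sup_near_nonmaximiser:
  assumes s: "s \<in> K" "s \<notin> {s\<in>W. \<forall>s'\<in>W. x s' \<le> x s}"
  obtains r \<eta> where "0 < r" "0 < \<eta>" "\<And>y. y \<in> W \<Longrightarrow> dist y s < r \<Longrightarrow> x y \<le> Sup (x ` W) - \<eta>"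
proof (cases "s \<in> W")
  case True
  then obtain s' where "s' \<in> W" "x s < x s'" using s(2) by (auto simp: not_le)
  then have "x s < Sup (x ` W)" using x_le_Sup by fastforce
  define \<eta> where "\<eta> = (Sup (x ` W) - x s) / 2"
  have "0 < \<eta>" and \<eta>2: "2 * \<eta> = Sup (x ` W) - x s"
    using \<open>x s < Sup (x ` W)\<close> by (simp_all add: \<eta>_def)
  then obtain r where "0 < r" and r: "\<And>y. y \<in> K \<Longrightarrow> dist y s < r \<Longrightarrow> dist (x y) (x s) < \<eta>"
    using continuous_x s(1) unfolding continuous_on_iff by metis
  have "x y \<le> Sup (x ` W) - \<eta>" if "y \<in> W" "dist y s < r" for y
  proof -
    have "\<bar>x y - x s\<bar> < \<eta>" using r[of y] that W_subset by (auto simp: dist_real_def)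
    then show ?thesis using abs_ge_self[of "x y - x s"] \<eta>2 by linarith
  qed
  with \<open>0 < r\<close> \<open>0 < \<eta>\<close> show ?thesis by (rule that)
next
  case False
  moreover have "open (- W)" using compact_W by (simp add: compact_imp_closed open_Compl)
  ultimately obtain r where "0 < r" "ball s r \<subseteq> - W"
    using open_contains_ball by blast
  then have "x y \<le> Sup (x ` W) - 1" if "y \<in> W" "dist y s < r" for y
    using that by (auto simp: dist_commute subset_iff)
  with \<open>0 < r\<close> show ?thesis using that[of r 1] by simp
qed

text \<open>Raising \<open>x\<close> by \<open>\<eta> f\<close>, for a cutoff \<open>f\<close> near \<open>s\<close>, keeps it below its maximum on \<open>W\<close>;
  the subgradient inequality then forces \<open>\<langle>\<nu>, f\<rangle> \<le> 0\<close>.\<close>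

lemma tv_Int_ball_eq_0:
  assumes "0 < \<eta>" and below: "\<And>y. y \<in> W \<Longrightarrow> dist y s < r \<Longrightarrow> x y \<le> Sup (x ` W) - \<eta>"
  shows "tv K \<nu> (K \<inter> ball s r) = 0"
proof -
  define V where "V = K \<inter> ball s r"
  have V: "openin (top_of_set K) V" unfolding V_def by (simp add: openin_open_Int)
  have "tv K \<nu> C = 0" if C: "compact C" "C \<subseteq> V" for C
  proof -
    obtain f where f: "cutoff K C V f" using cutoff_exists[OF C V] .
    have CK: "C \<in> bsets K" using C bsets_compact V_def by blast
    have "spair K \<nu> (\<lambda>y. (x y + \<eta> * f y) - x y) \<le> Sup (x ` W) - Sup (x ` W)"
    proof (rule spair_diff_le)
      show "continuous_on K (\<lambda>y. x y + \<eta> * f y)"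
        using f unfolding cutoff_def by (intro continuous_intros continuous_x) auto
      fix y assume y: "y \<in> W"
      then have "y \<in> K" using W_subset by blast
      show "x y + \<eta> * f y \<le> Sup (x ` W)"
      proof (cases "dist y s < r")
        case True
        have "\<eta> * f y \<le> \<eta>" using f \<open>y \<in> K\<close> \<open>0 < \<eta>\<close> by (simp add: cutoff_def)
        then show ?thesis using below[OF y True] by simp
      next
        case False
        then have "f y = 0" using f \<open>y \<in> K\<close> by (simp add: cutoff_def V_def dist_commute)
        then show ?thesis using x_le_Sup[OF y] by simp
      qed
    qed
    then have "spair K \<nu> f \<le> 0"
      using spair_cmult[of K \<nu> \<eta> f] \<open>0 < \<eta>\<close> by (simp add: mult_le_0_iff)
    moreover have "\<nu> C \<le> spair K \<nu> f"
      using spair_cutoff_ge[OF f CK bsets_openin[OF V]] tv_eq_nu CK bsets_openin[OF V] by simp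
    ultimately show ?thesis using tv_eq_nu[OF CK] nu_nonneg[OF CK] by simp
  qed
  then have "tv K \<nu> V = (SUP C \<in> {C. compact C \<and> C \<subseteq> V}. 0)"
    using regular bsets_openin[OF V] unfolding regular_sm_def by (auto intro: SUP_cong)
  also have "\<dots> = 0" by (rule cSUP_const) auto
  finally show ?thesis by (simp add: V_def)
qed

lemma supp_subset_argmax: "supp_sm K \<nu> \<subseteq> {s\<in>W. \<forall>s'\<in>W. x s' \<le> x s}"
proof
  fix s assume s: "s \<in> supp_sm K \<nu>"
  then have "s \<in> K" by (simp add: supp_sm_def)
  show "s \<in> {s\<in>W. \<forall>s'\<in>W. x s' \<le> x s}"
  proof (rule ccontr)
    assume "s \<notin> {s\<in>W. \<forall>s'\<in>W. x s' \<le> x s}"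
    then obtain r \<eta> where "0 < r" "0 < \<eta>" "\<And>y. y \<in> W \<Longrightarrow> dist y s < r \<Longrightarrow> x y \<le> Sup (x ` W) - \<eta>"
      using below_Sup_near_nonmaximiser \<open>s \<in> K\<close> by blast
    then have "tv K \<nu> (K \<inter> ball s r) = 0" by (intro tv_Int_ball_eq_0)
    moreover have "openin (top_of_set K) (K \<inter> ball s r)" by (simp add: openin_open_Int)
    ultimately show False using s \<open>s \<in> K\<close> \<open>0 < r\<close> unfolding supp_sm_def by auto
  qed
qed

lemma nonneg_tvnorm_supp:
  "sm_nonneg K \<nu> \<and> tvnorm K \<nu> = 1 \<and> supp_sm K \<nu> \<subseteq> {s\<in>W. \<forall>s'\<in>W. x s' \<le> x s}"
  using nu_nonneg tv_eq_nu[OF bsets_top] nu_space_eq_1 supp_subset_argmax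
  by (simp add: sm_nonneg_def tvnorm_def)

end

lemma in_subdiff_max_imp_window_max_subgradient:
  assumes "signed_measure_on {-\<tau>..T} \<nu>" "t \<in> {0..T}" "0 < \<tau>"
    and "continuous_on {-\<tau>..T} x" "in_subdiff_max \<tau> T t x \<nu>"
  shows "window_max_subgradient {-\<tau>..T} \<nu> {t-\<tau>..t} x"
  using assms signed_measure_on_imp_finite_signed_measure[OF assms(1)]
  unfolding window_max_subgradient_def window_max_subgradient_axioms_def
    signed_measure_on_def in_subdiff_max_def
  by auto

theorem corollary6p4:
  fixes \<tau> T \<delta> :: real
    and F0 :: "real^'n \<Rightarrow> real^'n \<Rightarrow> real^'n"
    and F1 :: "real^'n \<Rightarrow> real^'n \<Rightarrow> real^'m^'n"
    and \<phi> :: "real \<Rightarrow> real^'n" and U :: "(real^'m) set"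
    and j :: "real \<Rightarrow> real^'n \<Rightarrow> real^'m \<Rightarrow> real"
    and xs :: "real \<Rightarrow> real^'n" and us :: "real \<Rightarrow> real^'m"
    and xk :: "nat \<Rightarrow> real \<Rightarrow> real^'n" and uk :: "nat \<Rightarrow> real \<Rightarrow> real^'m"
    and \<mu> :: "real \<Rightarrow> 'n \<Rightarrow> real set \<Rightarrow> real"
  assumes "standing_assms \<tau> T F0 F1 \<phi> U j"
    and "0 < \<delta>"
    and "local_solution_P \<tau> T F0 F1 \<phi> U j \<delta> xs us"
    and "\<And>k. 1 \<le> k \<Longrightarrow> global_solution_Pk k \<tau> T F0 F1 \<phi> U j \<delta> us (xk k) (uk k)"
    and "Linf_w \<tau> T \<mu>"
    and "\<exists>r. strict_mono r \<and> (\<forall>l. 1 \<le> r l) \<and>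
           (\<forall>Z :: 'n \<Rightarrow> real \<Rightarrow> real \<Rightarrow> real. (\<forall>i. L1C \<tau> T (Z i)) \<longrightarrow>
              (\<lambda>l. \<Sum>i\<in>UNIV. \<integral>t. spair {-\<tau>..T} (muk \<tau> (r l) (xk (r l)) t i) (Z i t) \<partial>lebesgue_on {0..T})
              \<longlonglongrightarrow> (\<Sum>i\<in>UNIV. \<integral>t. spair {-\<tau>..T} (\<mu> t i) (Z i t) \<partial>lebesgue_on {0..T}))"
    and "AE t in lebesgue_on {0..T}. \<forall>i. in_subdiff_max \<tau> T t (\<lambda>s. xs s $ i) (\<mu> t i)"
  shows "AE t in lebesgue_on {0..T}. \<forall>i.
           sm_nonneg {-\<tau>..T} (\<mu> t i) \<and> tvnorm {-\<tau>..T} (\<mu> t i) = 1 \<and>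
           supp_sm {-\<tau>..T} (\<mu> t i) \<subseteq> argmax_win \<tau> t (\<lambda>s. xs s $ i)"
proof -
  have "0 < \<tau>" using assms(1) by (simp add: standing_assms_def)
  have x: "continuous_on {-\<tau>..T} (\<lambda>s. xs s $ i)" for i
    using assms(3) unfolding local_solution_P_def is_state_def by (auto intro: continuous_on_component)
  have \<mu>: "signed_measure_on {-\<tau>..T} (\<mu> t i)" if "t \<in> {0..T}" for t i
    using assms(5) that unfolding Linf_w_def by blast
  have "AE t in lebesgue_on {0..T}. t \<in> {0..T}" by (rule AE_I2) simp
  with assms(7) show ?thesis
  proof eventually_elim
    case (elim t)
    show ?case
    proof
      fix i
      interpret window_max_subgradient "{-\<tau>..T}" "\<mu> t i" "{t-\<tau>..t}" "\<lambda>s. xs s $ i"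
        using in_subdiff_max_imp_window_max_subgradient \<mu> x \<open>0 < \<tau>\<close> elim by blast
      show "sm_nonneg {-\<tau>..T} (\<mu> t i) \<and> tvnorm {-\<tau>..T} (\<mu> t i) = 1 \<and>
          supp_sm {-\<tau>..T} (\<mu> t i) \<subseteq> argmax_win \<tau> t (\<lambda>s. xs s $ i)"
        using nonneg_tvnorm_supp by (simp add: argmax_win_def)
    qed
  qed
qed

end
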